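(* Let $p$ be a prime, $\mathbb{K}$ a finite extension of $\mathbb{Q}_p$ of degree $n$ (with the unique extension of the $p$-adic norm), and $G$ a topological group. Then $EH^2_{cb}(G, \mathbb{K}) \cong EH^2_{cb}(G, \mathbb{Q}_p)^n$ (as $\mathbb{Q}_p$-vector spaces). In particular, $EH^2_{cb}(G, \mathbb{K}) = 0$ if and only if $EH^2_{cb}(G, \mathbb{Q}_p) = 0$.
   Context: For a valued field $\mathbb{L}$, a quasimorphism $G\to\mathbb{L}$ is a continuous map $f$ with $\sup_{g,h}|f(gh)-f(g)-f(h)|<\infty$. The exact second continuous bounded cohomology is $EH^2_{cb}(G,\mathbb{L})=Q(G,\mathbb{L})/(\mathrm{Hom}_c(G,\mathbb{L})+C_b(G,\mathbb{L}))$, where $Q$ is the space of quasimorphisms, $\mathrm{Hom}_c$ continuous homomorphisms and $C_b$ continuous bounded functions; equivalently, the kernel of the comparison map $H^2_{cb}(G,\mathbb{L})\to H^2_c(G,\mathbb{L})$ with trivial coefficients. *)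

theory Defs
  imports "HOL-Analysis.Analysis" "HOL-Computational_Algebra.Primes" "HOL-Algebra.Group"
begin

definition absval :: "('a::field \<Rightarrow> real) \<Rightarrow> bool" where
  "absval av \<longleftrightarrow> av 0 = 0 \<and> (\<forall>x. x \<noteq> 0 \<longrightarrow> av x > 0)
     \<and> (\<forall>x y. av (x * y) = av x * av y) \<and> (\<forall>x y. av (x + y) \<le> av x + av y)"

definition padic_val_rat :: "nat \<Rightarrow> rat \<Rightarrow> int" where
  "padic_val_rat p r = (case quotient_of r of (a, b) \<Rightarrow>
      int (multiplicity (int p) a) - int (multiplicity (int p) b))"

definition padic_abs_rat :: "nat \<Rightarrow> rat \<Rightarrow> real" where
  "padic_abs_rat p r = (if r = 0 then 0 else real p powr (- real_of_int (padic_val_rat p r)))"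

text \<open>A field with absolute value is (a copy of) Q_p iff it is the completion of
  Q with respect to the p-adic absolute value: the absolute value extends the
  p-adic one on Q, Q is dense, and the field is complete.\<close>
definition is_Qp :: "nat \<Rightarrow> ('q::field_char_0 \<Rightarrow> real) \<Rightarrow> bool" where
  "is_Qp p av \<longleftrightarrow> absval av
     \<and> (\<forall>r. av (of_rat r) = padic_abs_rat p r)
     \<and> (\<forall>x e. e > 0 \<longrightarrow> (\<exists>r. av (x - of_rat r) < e))
     \<and> (\<forall>X::nat \<Rightarrow> 'q. (\<forall>e>0. \<exists>N. \<forall>m\<ge>N. \<forall>k\<ge>N. av (X m - X k) < e)
           \<longrightarrow> (\<exists>L. \<forall>e>0. \<exists>N. \<forall>m\<ge>N. av (X m - L) < e))"

definition abs_topology :: "('a::field \<Rightarrow> real) \<Rightarrow> 'a topology" where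
  "abs_topology av = topology (\<lambda>U. \<forall>x\<in>U. \<exists>e>0. \<forall>y. av (y - x) < e \<longrightarrow> y \<in> U)"

definition topological_group :: "('g, 'b) monoid_scheme \<Rightarrow> 'g topology \<Rightarrow> bool" where
  "topological_group G T \<longleftrightarrow> group G \<and> topspace T = carrier G
     \<and> continuous_map (prod_topology T T) T (\<lambda>(x, y). x \<otimes>\<^bsub>G\<^esub> y)
     \<and> continuous_map T T (\<lambda>x. inv\<^bsub>G\<^esub> x)"

text \<open>Functions on G are represented as functions on the ambient type vanishing
  outside the carrier.\<close>
definition QM :: "('g, 'b) monoid_scheme \<Rightarrow> 'g topology \<Rightarrow> ('a::field \<Rightarrow> real) \<Rightarrow> ('g \<Rightarrow> 'a) set" where
  "QM G T av = {f. continuous_map T (abs_topology av) f \<and> (\<forall>x. x \<notin> carrier G \<longrightarrow> f x = 0)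
     \<and> (\<exists>C. \<forall>g\<in>carrier G. \<forall>h\<in>carrier G. av (f (g \<otimes>\<^bsub>G\<^esub> h) - f g - f h) \<le> C)}"

definition HOMc :: "('g, 'b) monoid_scheme \<Rightarrow> 'g topology \<Rightarrow> ('a::field \<Rightarrow> real) \<Rightarrow> ('g \<Rightarrow> 'a) set" where
  "HOMc G T av = {f. continuous_map T (abs_topology av) f \<and> (\<forall>x. x \<notin> carrier G \<longrightarrow> f x = 0)
     \<and> (\<forall>g\<in>carrier G. \<forall>h\<in>carrier G. f (g \<otimes>\<^bsub>G\<^esub> h) = f g + f h)}"

definition CB :: "('g, 'b) monoid_scheme \<Rightarrow> 'g topology \<Rightarrow> ('a::field \<Rightarrow> real) \<Rightarrow> ('g \<Rightarrow> 'a) set" where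
  "CB G T av = {f. continuous_map T (abs_topology av) f \<and> (\<forall>x. x \<notin> carrier G \<longrightarrow> f x = 0)
     \<and> (\<exists>C. \<forall>g\<in>carrier G. av (f g) \<le> C)}"

definition HB :: "('g, 'b) monoid_scheme \<Rightarrow> 'g topology \<Rightarrow> ('a::field \<Rightarrow> real) \<Rightarrow> ('g \<Rightarrow> 'a) set" where
  "HB G T av = {(\<lambda>x. h x + b x) | h b. h \<in> HOMc G T av \<and> b \<in> CB G T av}"

definition EHcls :: "('g, 'b) monoid_scheme \<Rightarrow> 'g topology \<Rightarrow> ('a::field \<Rightarrow> real) \<Rightarrow> ('g \<Rightarrow> 'a) \<Rightarrow> ('g \<Rightarrow> 'a) set" where
  "EHcls G T av f = {g \<in> QM G T av. (\<lambda>x. g x - f x) \<in> HB G T av}"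

definition EH2cb :: "('g, 'b) monoid_scheme \<Rightarrow> 'g topology \<Rightarrow> ('a::field \<Rightarrow> real) \<Rightarrow> ('g \<Rightarrow> 'a) set set" where
  "EH2cb G T av = EHcls G T av ` QM G T av"

end

theory Submission
  imports Defs
begin

text \<open>
  Via \<open>\<iota>\<close> and the basis \<open>bs\<close>, the field K is an n-dimensional normed space over the
  complete field Q_p, so its absolute value is equivalent to the maximum of the absolute values
  of the coordinates: every coordinate map is bounded. The proof of this is the usual induction
  on the number of basis vectors, where completeness shows that a basis vector keeps positive
  distance from the span of the others. Consequently a K-valued function on G is continuous,
  a quasimorphism, a homomorphism or bounded iff each of its n coordinates is, so taking
  coordinates induces a Q_p-linear bijection from EH(G, K) onto EH(G, Q_p)^n.
\<close>

lemma absval_zero: "absval av \<Longrightarrow> av 0 = 0"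
  by (simp add: absval_def)

lemma absval_nonneg: "absval av \<Longrightarrow> av x \<ge> 0"
  unfolding absval_def by (cases "x = 0") (auto intro: less_imp_le)

lemma absval_mult: "absval av \<Longrightarrow> av (x * y) = av x * av y"
  by (simp add: absval_def)

lemma absval_triangle: "absval av \<Longrightarrow> av (x + y) \<le> av x + av y"
  by (simp add: absval_def)

lemma absval_eq_0_iff: "absval av \<Longrightarrow> av x = 0 \<longleftrightarrow> x = 0"
  unfolding absval_def by (cases "x = 0") auto

lemma absval_minus: "absval av \<Longrightarrow> av (- x) = av x"
proof -
  assume av: "absval av"
  have "av 1 * av 1 = av 1" and "av 1 > 0"
    using absval_mult[OF av, of 1 1] av by (auto simp: absval_def)
  then have "av (- 1) * av (- 1) = 1"
    using absval_mult[OF av, of "- 1" "- 1"] by simp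
  then have "av (- 1) = 1"
    using absval_nonneg[OF av, of "- 1"] by (metis abs_of_nonneg abs_square_eq_1 power2_eq_square)
  then show ?thesis
    using absval_mult[OF av, of "- 1" x] by simp
qed

lemma absval_diff_commute: "absval av \<Longrightarrow> av (x - y) = av (y - x)"
  by (metis absval_minus minus_diff_eq)

lemma absval_triangle_diff: "absval av \<Longrightarrow> av (x - z) \<le> av (x - y) + av (y - z)"
  using absval_triangle[of av "x - y" "y - z"] by simp

lemma absval_sum: "absval av \<Longrightarrow> av (\<Sum>i\<in>I. f i) \<le> (\<Sum>i\<in>I. av (f i))"
proof (induction I rule: infinite_finite_induct)
  case (insert i I)
  then show ?case
    using absval_triangle[of av "f i" "sum f I"] by simp
qed (simp_all add: absval_zero)

lemma absval_Cauchy_if_tendsto: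
  assumes av: "absval av" and lim: "(\<lambda>k. av (X k - L)) \<longlonglongrightarrow> 0"
  shows "\<forall>e>0. \<exists>N. \<forall>m\<ge>N. \<forall>k\<ge>N. av (X m - X k) < e"
proof (intro allI impI)
  fix e :: real assume "e > 0"
  then obtain N where N: "\<And>k. k \<ge> N \<Longrightarrow> av (X k - L) < e / 2"
    using lim[THEN order_tendstoD(2), of "e / 2"] by (auto simp: eventually_sequentially)
  have "av (X m - X k) < e" if "m \<ge> N" "k \<ge> N" for m k
    using absval_triangle_diff[OF av, of "X m" "X k" L] absval_diff_commute[OF av, of "X k" L]
      N[OF that(1)] N[OF that(2)] by linarith
  then show "\<exists>N. \<forall>m\<ge>N. \<forall>k\<ge>N. av (X m - X k) < e" by blast
qed

lemma openin_abs_topology: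
  "openin (abs_topology av) U \<longleftrightarrow> (\<forall>x\<in>U. \<exists>e>0. \<forall>y. av (y - x) < e \<longrightarrow> y \<in> U)"
proof -
  have "istopology (\<lambda>U. \<forall>x\<in>U. \<exists>e>0. \<forall>y. av (y - x) < e \<longrightarrow> y \<in> U)"
    unfolding istopology_def
  proof (intro conjI allI impI ballI)
    fix S T x
    assume "\<forall>x\<in>S. \<exists>e>0. \<forall>y. av (y - x) < e \<longrightarrow> y \<in> S"
      and "\<forall>x\<in>T. \<exists>e>0. \<forall>y. av (y - x) < e \<longrightarrow> y \<in> T" and "x \<in> S \<inter> T"
    then obtain e1 e2 where "e1 > 0" "e2 > 0"
      and "\<forall>y. av (y - x) < e1 \<longrightarrow> y \<in> S" "\<forall>y. av (y - x) < e2 \<longrightarrow> y \<in> T"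
      by blast
    then show "\<exists>e>0. \<forall>y. av (y - x) < e \<longrightarrow> y \<in> S \<inter> T"
      by (intro exI[of _ "min e1 e2"]) auto
  next
    fix K x
    assume "\<forall>U\<in>K. \<forall>x\<in>U. \<exists>e>0. \<forall>y. av (y - x) < e \<longrightarrow> y \<in> U" and "x \<in> \<Union> K"
    then show "\<exists>e>0. \<forall>y. av (y - x) < e \<longrightarrow> y \<in> \<Union> K"
      by (meson UnionE UnionI)
  qed
  then show ?thesis
    unfolding abs_topology_def by simp
qed

lemma topspace_abs_topology [simp]: "topspace (abs_topology av) = UNIV"
proof -
  have "openin (abs_topology av) UNIV"
    by (auto simp: openin_abs_topology intro!: exI[of _ "1::real"])
  then show ?thesis
    using openin_subset by blast
qed

lemma openin_abs_topology_ball: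
  assumes "absval av"
  shows "openin (abs_topology av) {y. av (y - x) < e}"
  unfolding openin_abs_topology
proof (intro ballI)
  fix y assume "y \<in> {y. av (y - x) < e}"
  then have y: "av (y - x) < e" by simp
  show "\<exists>d>0. \<forall>z. av (z - y) < d \<longrightarrow> z \<in> {y. av (y - x) < e}"
  proof (intro exI[of _ "e - av (y - x)"] conjI allI impI)
    fix z assume "av (z - y) < e - av (y - x)"
    then show "z \<in> {y. av (y - x) < e}"
      using absval_triangle_diff[OF assms, of z x y] by simp
  qed (use y in simp)
qed

lemma continuous_map_abs_topology_iff:
  assumes av: "absval av"
  shows "continuous_map T (abs_topology av) f \<longleftrightarrow>
    (\<forall>x0\<in>topspace T. \<forall>e>0. \<exists>V. openin T V \<and> x0 \<in> V \<and> (\<forall>x\<in>V. av (f x - f x0) < e))"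
proof
  assume f: "continuous_map T (abs_topology av) f"
  show "\<forall>x0\<in>topspace T. \<forall>e>0. \<exists>V. openin T V \<and> x0 \<in> V \<and> (\<forall>x\<in>V. av (f x - f x0) < e)"
  proof (intro ballI allI impI)
    fix x0 and e :: real assume "x0 \<in> topspace T" "e > 0"
    then show "\<exists>V. openin T V \<and> x0 \<in> V \<and> (\<forall>x\<in>V. av (f x - f x0) < e)"
      using openin_continuous_map_preimage[OF f openin_abs_topology_ball[OF av, of "f x0" e]]
      by (intro exI[of _ "{x \<in> topspace T. f x \<in> {y. av (y - f x0) < e}}"])
        (auto simp: absval_zero[OF av])
  qed
next
  assume near: "\<forall>x0\<in>topspace T. \<forall>e>0. \<exists>V. openin T V \<and> x0 \<in> V \<and> (\<forall>x\<in>V. av (f x - f x0) < e)"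
  show "continuous_map T (abs_topology av) f"
    unfolding continuous_map_def
  proof (intro conjI allI impI)
    fix U assume U: "openin (abs_topology av) U"
    have "\<exists>V. openin T V \<and> x0 \<in> V \<and> V \<subseteq> {x \<in> topspace T. f x \<in> U}"
      if x0: "x0 \<in> topspace T" and fx0: "f x0 \<in> U" for x0
    proof -
      obtain e where "e > 0" and e: "\<forall>y. av (y - f x0) < e \<longrightarrow> y \<in> U"
        using U fx0 unfolding openin_abs_topology by blast
      obtain V where V: "openin T V" "x0 \<in> V" "\<forall>x\<in>V. av (f x - f x0) < e"
        using near x0 by (meson \<open>e > 0\<close>)
      moreover have "V \<subseteq> {x \<in> topspace T. f x \<in> U}"
        using openin_subset[OF V(1)] V(3) e by auto
      ultimately show ?thesis
        by blast
    qed
    then show "openin T {x \<in> topspace T. f x \<in> U}"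
      by (subst openin_subopen) auto
  qed simp
qed

lemma continuous_map_abs_topology_add:
  assumes av: "absval av"
    and u: "continuous_map T (abs_topology av) u" and v: "continuous_map T (abs_topology av) v"
  shows "continuous_map T (abs_topology av) (\<lambda>x. u x + v x)"
  unfolding continuous_map_abs_topology_iff[OF av]
proof (intro ballI allI impI)
  fix x0 and e :: real assume x0: "x0 \<in> topspace T" and "e > 0"
  then obtain V1 V2 where V1: "openin T V1" "x0 \<in> V1" "\<forall>x\<in>V1. av (u x - u x0) < e / 2"
    and V2: "openin T V2" "x0 \<in> V2" "\<forall>x\<in>V2. av (v x - v x0) < e / 2"
    using u v unfolding continuous_map_abs_topology_iff[OF av] by (meson half_gt_zero)
  have "av (u x + v x - (u x0 + v x0)) < e" if "x \<in> V1 \<inter> V2" for x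
  proof -
    have "av (u x + v x - (u x0 + v x0)) \<le> av (u x - u x0) + av (v x - v x0)"
      using absval_triangle[OF av, of "u x - u x0" "v x - v x0"] by (simp add: algebra_simps)
    then show ?thesis
      using that V1(3) V2(3) by force
  qed
  then show "\<exists>V. openin T V \<and> x0 \<in> V \<and> (\<forall>x\<in>V. av (u x + v x - (u x0 + v x0)) < e)"
    using V1 V2 by (intro exI[of _ "V1 \<inter> V2"]) auto
qed

definition bounded_additive :: "('a::field \<Rightarrow> real) \<Rightarrow> ('b::field \<Rightarrow> real) \<Rightarrow> ('a \<Rightarrow> 'b) \<Rightarrow> bool" where
  "bounded_additive av av' \<phi> \<longleftrightarrow>
     (\<forall>x y. \<phi> (x + y) = \<phi> x + \<phi> y) \<and> (\<exists>C. \<forall>x. av' (\<phi> x) \<le> C * av x)"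

lemma bounded_additive_add: "bounded_additive av av' \<phi> \<Longrightarrow> \<phi> (x + y) = \<phi> x + \<phi> y"
  by (simp add: bounded_additive_def)

lemma bounded_additive_zero: "bounded_additive av av' \<phi> \<Longrightarrow> \<phi> 0 = 0"
  using bounded_additive_add[of av av' \<phi> 0 0] by (metis add.right_neutral add_left_cancel)

lemma bounded_additive_diff: "bounded_additive av av' \<phi> \<Longrightarrow> \<phi> (x - y) = \<phi> x - \<phi> y"
  using bounded_additive_add[of av av' \<phi> "x - y" y] by (simp add: eq_diff_eq)

lemma bounded_additive_bound:
  assumes av: "absval av" and \<phi>: "bounded_additive av av' \<phi>"
  obtains C where "C \<ge> 0" "\<And>x. av' (\<phi> x) \<le> C * av x"
proof -
  obtain C where C: "\<And>x. av' (\<phi> x) \<le> C * av x"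
    using \<phi> unfolding bounded_additive_def by blast
  have "av' (\<phi> x) \<le> max C 0 * av x" for x
    using C[of x] mult_right_mono[OF max.cobounded1 absval_nonneg[OF av]] by (rule order_trans)
  then show thesis
    by (rule that[rotated]) simp
qed

lemma bounded_additive_scale: "absval av \<Longrightarrow> bounded_additive av av (\<lambda>x. k * x)"
  unfolding bounded_additive_def by (auto simp: distrib_left absval_mult intro: exI[of _ "av k"])

lemma continuous_map_bounded_additive:
  assumes av: "absval av" and av': "absval av'" and \<phi>: "bounded_additive av av' \<phi>"
  shows "continuous_map (abs_topology av) (abs_topology av') \<phi>"
proof -
  obtain C where C: "C \<ge> 0" "\<And>x. av' (\<phi> x) \<le> C * av x"
    using bounded_additive_bound[OF av \<phi>] by blast
  have near: "av' (\<phi> x - \<phi> x0) < e" if "av (x - x0) < e / (C + 1)" for x x0 e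
  proof -
    have "av' (\<phi> x - \<phi> x0) \<le> C * av (x - x0)"
      using C(2)[of "x - x0"] by (simp add: bounded_additive_diff[OF \<phi>])
    also have "\<dots> \<le> (C + 1) * av (x - x0)"
      using absval_nonneg[OF av, of "x - x0"] by (simp add: distrib_right)
    also have "\<dots> < e"
      using that C(1) by (simp add: pos_less_divide_eq mult.commute)
    finally show ?thesis .
  qed
  show ?thesis
    unfolding continuous_map_abs_topology_iff[OF av']
  proof (intro ballI allI impI)
    fix x0 and e :: real assume "e > 0"
    then show "\<exists>V. openin (abs_topology av) V \<and> x0 \<in> V \<and> (\<forall>x\<in>V. av' (\<phi> x - \<phi> x0) < e)"
      using near C(1) openin_abs_topology_ball[OF av, of x0 "e / (C + 1)"]
      by (intro exI[of _ "{x. av (x - x0) < e / (C + 1)}"]) (auto simp: absval_zero[OF av])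
  qed
qed

section \<open>Quasimorphisms modulo Hom_c + C_b\<close>

lemma sum_closed_if_add_closed:
  assumes "(\<lambda>_. 0) \<in> S" and "\<And>u v. u \<in> S \<Longrightarrow> v \<in> S \<Longrightarrow> (\<lambda>x. u x + v x) \<in> S"
    and "\<And>i. i \<in> I \<Longrightarrow> u i \<in> S"
  shows "(\<lambda>x. \<Sum>i\<in>I. u i x) \<in> S"
  using assms(3)
proof (induction I rule: infinite_finite_induct)
  case (insert i I)
  then show ?case
    using assms(2)[of "u i" "\<lambda>x. \<Sum>i\<in>I. u i x"] by simp
qed (simp_all add: assms(1))

lemma QM_zero: "absval av \<Longrightarrow> (\<lambda>_. 0) \<in> QM G T av"
  unfolding QM_def by (auto simp: absval_zero)

lemma HOMc_zero: "(\<lambda>_. 0) \<in> HOMc G T av"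
  unfolding HOMc_def by simp

lemma CB_zero: "(\<lambda>_. 0) \<in> CB G T av"
  unfolding CB_def by auto

lemma QM_add:
  assumes av: "absval av" and u: "u \<in> QM G T av" and v: "v \<in> QM G T av"
  shows "(\<lambda>x. u x + v x) \<in> QM G T av"
proof -
  obtain C D where C: "\<forall>g\<in>carrier G. \<forall>h\<in>carrier G. av (u (g \<otimes>\<^bsub>G\<^esub> h) - u g - u h) \<le> C"
    and D: "\<forall>g\<in>carrier G. \<forall>h\<in>carrier G. av (v (g \<otimes>\<^bsub>G\<^esub> h) - v g - v h) \<le> D"
    using u v unfolding QM_def by blast
  have "av (u (g \<otimes>\<^bsub>G\<^esub> h) + v (g \<otimes>\<^bsub>G\<^esub> h) - (u g + v g) - (u h + v h)) \<le> C + D"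
    if "g \<in> carrier G" "h \<in> carrier G" for g h
  proof -
    have eq: "u (g \<otimes>\<^bsub>G\<^esub> h) + v (g \<otimes>\<^bsub>G\<^esub> h) - (u g + v g) - (u h + v h)
        = (u (g \<otimes>\<^bsub>G\<^esub> h) - u g - u h) + (v (g \<otimes>\<^bsub>G\<^esub> h) - v g - v h)"
      by (simp add: algebra_simps)
    have "av (u (g \<otimes>\<^bsub>G\<^esub> h) - u g - u h) \<le> C" "av (v (g \<otimes>\<^bsub>G\<^esub> h) - v g - v h) \<le> D"
      using C D that by auto
    then show ?thesis
      unfolding eq
      using absval_triangle[OF av, of "u (g \<otimes>\<^bsub>G\<^esub> h) - u g - u h" "v (g \<otimes>\<^bsub>G\<^esub> h) - v g - v h"]
      by linarith
  qed
  then show ?thesis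
    using u v continuous_map_abs_topology_add[OF av] unfolding QM_def by auto
qed

lemma HOMc_add:
  assumes av: "absval av" and u: "u \<in> HOMc G T av" and v: "v \<in> HOMc G T av"
  shows "(\<lambda>x. u x + v x) \<in> HOMc G T av"
  using u v continuous_map_abs_topology_add[OF av] unfolding HOMc_def by (auto simp: algebra_simps)

lemma CB_add:
  assumes av: "absval av" and u: "u \<in> CB G T av" and v: "v \<in> CB G T av"
  shows "(\<lambda>x. u x + v x) \<in> CB G T av"
proof -
  obtain C D where "\<forall>g\<in>carrier G. av (u g) \<le> C" and "\<forall>g\<in>carrier G. av (v g) \<le> D"
    using u v unfolding CB_def by blast
  then have "\<forall>g\<in>carrier G. av (u g + v g) \<le> C + D"
    using absval_triangle[OF av] by (fastforce intro: order_trans)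
  then show ?thesis
    using u v continuous_map_abs_topology_add[OF av] unfolding CB_def by auto
qed

lemma continuous_map_bounded_additive_compose:
  assumes "absval av" "absval av'" "bounded_additive av av' \<phi>"
    and "continuous_map T (abs_topology av) f"
  shows "continuous_map T (abs_topology av') (\<lambda>x. \<phi> (f x))"
  using continuous_map_compose[OF assms(4) continuous_map_bounded_additive[OF assms(1-3)]]
  by (simp add: o_def)

lemma QM_compose:
  assumes av: "absval av" and av': "absval av'" and \<phi>: "bounded_additive av av' \<phi>"
    and f: "f \<in> QM G T av"
  shows "(\<lambda>x. \<phi> (f x)) \<in> QM G T av'"
proof -
  obtain C where C: "C \<ge> 0" "\<And>x. av' (\<phi> x) \<le> C * av x"
    using bounded_additive_bound[OF av \<phi>] by blast
  obtain D where D: "\<forall>g\<in>carrier G. \<forall>h\<in>carrier G. av (f (g \<otimes>\<^bsub>G\<^esub> h) - f g - f h) \<le> D"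
    using f unfolding QM_def by blast
  have "av' (\<phi> (f (g \<otimes>\<^bsub>G\<^esub> h)) - \<phi> (f g) - \<phi> (f h)) \<le> C * D"
    if "g \<in> carrier G" "h \<in> carrier G" for g h
  proof -
    have "av' (\<phi> (f (g \<otimes>\<^bsub>G\<^esub> h)) - \<phi> (f g) - \<phi> (f h)) = av' (\<phi> (f (g \<otimes>\<^bsub>G\<^esub> h) - f g - f h))"
      by (simp add: bounded_additive_diff[OF \<phi>])
    also have "\<dots> \<le> C * av (f (g \<otimes>\<^bsub>G\<^esub> h) - f g - f h)"
      by (rule C(2))
    also have "\<dots> \<le> C * D"
      using D that C(1) by (simp add: mult_left_mono)
    finally show ?thesis .
  qed
  then show ?thesis
    using f continuous_map_bounded_additive_compose[OF av av' \<phi>] bounded_additive_zero[OF \<phi>]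
    unfolding QM_def by auto
qed

lemma HOMc_compose:
  assumes av: "absval av" and av': "absval av'" and \<phi>: "bounded_additive av av' \<phi>"
    and f: "f \<in> HOMc G T av"
  shows "(\<lambda>x. \<phi> (f x)) \<in> HOMc G T av'"
  using f continuous_map_bounded_additive_compose[OF av av' \<phi>]
    bounded_additive_zero[OF \<phi>] bounded_additive_add[OF \<phi>]
  unfolding HOMc_def by auto

lemma CB_compose:
  assumes av: "absval av" and av': "absval av'" and \<phi>: "bounded_additive av av' \<phi>"
    and f: "f \<in> CB G T av"
  shows "(\<lambda>x. \<phi> (f x)) \<in> CB G T av'"
proof -
  obtain C where C: "C \<ge> 0" "\<And>x. av' (\<phi> x) \<le> C * av x"
    using bounded_additive_bound[OF av \<phi>] by blast
  obtain D where "\<forall>g\<in>carrier G. av (f g) \<le> D"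
    using f unfolding CB_def by blast
  then have "\<forall>g\<in>carrier G. av' (\<phi> (f g)) \<le> C * D"
    using C by (fastforce intro: order_trans mult_left_mono)
  then show ?thesis
    using f continuous_map_bounded_additive_compose[OF av av' \<phi>] bounded_additive_zero[OF \<phi>]
    unfolding CB_def by auto
qed

lemma HB_I: "h \<in> HOMc G T av \<Longrightarrow> b \<in> CB G T av \<Longrightarrow> (\<lambda>x. h x + b x) \<in> HB G T av"
  unfolding HB_def by blast

lemma HB_zero: "(\<lambda>_. 0) \<in> HB G T av"
  using HB_I[OF HOMc_zero CB_zero] by simp

lemma HB_add:
  assumes av: "absval av" and u: "u \<in> HB G T av" and v: "v \<in> HB G T av"
  shows "(\<lambda>x. u x + v x) \<in> HB G T av"
proof -
  obtain h1 b1 h2 b2 where "u = (\<lambda>x. h1 x + b1 x)" "h1 \<in> HOMc G T av" "b1 \<in> CB G T av"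
    and "v = (\<lambda>x. h2 x + b2 x)" "h2 \<in> HOMc G T av" "b2 \<in> CB G T av"
    using u v unfolding HB_def by blast
  then have "(\<lambda>x. u x + v x) = (\<lambda>x. (h1 x + h2 x) + (b1 x + b2 x))"
    and "(\<lambda>x. h1 x + h2 x) \<in> HOMc G T av" "(\<lambda>x. b1 x + b2 x) \<in> CB G T av"
    by (auto simp: algebra_simps HOMc_add[OF av] CB_add[OF av])
  then show ?thesis
    using HB_I by metis
qed

lemma HB_compose:
  assumes av: "absval av" and av': "absval av'" and \<phi>: "bounded_additive av av' \<phi>"
    and f: "f \<in> HB G T av"
  shows "(\<lambda>x. \<phi> (f x)) \<in> HB G T av'"
proof -
  obtain h b where "f = (\<lambda>x. h x + b x)" "h \<in> HOMc G T av" "b \<in> CB G T av"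
    using f unfolding HB_def by blast
  then have "(\<lambda>x. \<phi> (f x)) = (\<lambda>x. \<phi> (h x) + \<phi> (b x))"
    and "(\<lambda>x. \<phi> (h x)) \<in> HOMc G T av'" "(\<lambda>x. \<phi> (b x)) \<in> CB G T av'"
    by (auto simp: bounded_additive_add[OF \<phi>] HOMc_compose[OF av av' \<phi>] CB_compose[OF av av' \<phi>])
  then show ?thesis
    using HB_I by metis
qed

lemma HB_linear:
  assumes av: "absval av" and "u \<in> HB G T av" "v \<in> HB G T av"
  shows "(\<lambda>x. c * u x + v x) \<in> HB G T av"
  using HB_add[OF av HB_compose[OF av av bounded_additive_scale[OF av] assms(2)] assms(3)] .

lemma HB_diff:
  assumes av: "absval av" and "u \<in> HB G T av" "v \<in> HB G T av"
  shows "(\<lambda>x. u x - v x) \<in> HB G T av"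
  using HB_linear[OF av assms(3,2), of "- 1"] by simp

lemma QM_linear:
  assumes av: "absval av" and "u \<in> QM G T av" "v \<in> QM G T av"
  shows "(\<lambda>x. c * u x + v x) \<in> QM G T av"
  using QM_add[OF av QM_compose[OF av av bounded_additive_scale[OF av] assms(2)] assms(3)] .

lemma EHcls_self: "absval av \<Longrightarrow> f \<in> QM G T av \<Longrightarrow> f \<in> EHcls G T av f"
  unfolding EHcls_def using HB_zero by simp

lemma EHcls_eq_iff:
  assumes av: "absval av" and f: "f \<in> QM G T av" and g: "g \<in> QM G T av"
  shows "EHcls G T av f = EHcls G T av g \<longleftrightarrow> (\<lambda>x. g x - f x) \<in> HB G T av"
proof
  assume "EHcls G T av f = EHcls G T av g"
  then show "(\<lambda>x. g x - f x) \<in> HB G T av"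
    using EHcls_self[OF av g] unfolding EHcls_def by blast
next
  assume gf: "(\<lambda>x. g x - f x) \<in> HB G T av"
  have "(\<lambda>x. h x - g x) \<in> HB G T av \<longleftrightarrow> (\<lambda>x. h x - f x) \<in> HB G T av" for h
    using HB_diff[OF av _ gf, of "\<lambda>x. h x - f x"] HB_add[OF av _ gf, of "\<lambda>x. h x - g x"]
    by auto
  then show "EHcls G T av f = EHcls G T av g"
    unfolding EHcls_def by blast
qed

lemma EHcls_linear:
  assumes av: "absval av" and u: "u \<in> EHcls G T av f" and v: "v \<in> EHcls G T av g"
  shows "(\<lambda>x. c * u x + v x) \<in> EHcls G T av (\<lambda>x. c * f x + g x)"
proof -
  have "u \<in> QM G T av" "v \<in> QM G T av"
    and "(\<lambda>x. u x - f x) \<in> HB G T av" "(\<lambda>x. v x - g x) \<in> HB G T av"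
    using u v unfolding EHcls_def by auto
  then show ?thesis
    using QM_linear[OF av] HB_linear[OF av, of "\<lambda>x. u x - f x" G T "\<lambda>x. v x - g x" c]
    unfolding EHcls_def by (simp add: algebra_simps)
qed

text \<open>\<open>SOME f. f \<in> X\<close> is an arbitrary representative of the class \<open>X\<close>;
  by \<open>EH_map_EHcls\<close> the result does not depend on the choice.\<close>

definition EH_map :: "('g, 'b) monoid_scheme \<Rightarrow> 'g topology \<Rightarrow> ('a::field \<Rightarrow> real)
    \<Rightarrow> ('k \<Rightarrow> 'a) \<Rightarrow> ('g \<Rightarrow> 'k) set \<Rightarrow> ('g \<Rightarrow> 'a) set" where
  "EH_map G T av' \<phi> X = EHcls G T av' (\<lambda>x. \<phi> ((SOME f. f \<in> X) x))"

lemma EH_map_EHcls: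
  assumes av: "absval av" and av': "absval av'" and \<phi>: "bounded_additive av av' \<phi>"
    and f: "f \<in> QM G T av"
  shows "EH_map G T av' \<phi> (EHcls G T av f) = EHcls G T av' (\<lambda>x. \<phi> (f x))"
proof -
  define g where "g = (SOME g. g \<in> EHcls G T av f)"
  have "g \<in> EHcls G T av f"
    unfolding g_def using EHcls_self[OF av f] by (rule someI[of "\<lambda>g. g \<in> EHcls G T av f"])
  then have g: "g \<in> QM G T av" "(\<lambda>x. g x - f x) \<in> HB G T av"
    unfolding EHcls_def by auto
  have "(\<lambda>x. \<phi> (g x) - \<phi> (f x)) \<in> HB G T av'"
    using HB_compose[OF av av' \<phi> g(2)] by (simp add: bounded_additive_diff[OF \<phi>])
  then show ?thesis
    unfolding EH_map_def g_def[symmetric]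
    using EHcls_eq_iff[OF av' QM_compose[OF av av' \<phi> f] QM_compose[OF av av' \<phi> g(1)]] by simp
qed

section \<open>Coordinates in a finite extension of a complete valued field\<close>

text \<open>\<open>A\<close> is the absolute value of the complete base field (Q_p), \<open>\<iota>\<close> an isometric
  embedding into the extension K with absolute value \<open>B\<close>, and \<open>bs\<close> a basis of K over it.\<close>

locale finite_valued_extension =
  fixes A :: "'q::field \<Rightarrow> real" and B :: "'k::field \<Rightarrow> real"
    and \<iota> :: "'q \<Rightarrow> 'k" and bs :: "nat \<Rightarrow> 'k" and n :: nat
  assumes absval_A: "absval A" and absval_B: "absval B"
    and iota_add: "\<iota> (a + b) = \<iota> a + \<iota> b"
    and iota_mult: "\<iota> (a * b) = \<iota> a * \<iota> b"
    and iota_one: "\<iota> 1 = 1"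
    and abs_iota: "B (\<iota> a) = A a"
    and basis: "\<exists>!c. c \<in> {..<n} \<rightarrow>\<^sub>E UNIV \<and> x = (\<Sum>i<n. \<iota> (c i) * bs i)"
    and complete_A: "\<And>X :: nat \<Rightarrow> 'q. \<forall>e>0. \<exists>N. \<forall>m\<ge>N. \<forall>k\<ge>N. A (X m - X k) < e
      \<Longrightarrow> \<exists>L. \<forall>e>0. \<exists>N. \<forall>m\<ge>N. A (X m - L) < e"
begin

lemma iota_zero: "\<iota> 0 = 0"
  using iota_add[of 0 0] by (metis add.right_neutral add_left_cancel)

lemma iota_diff: "\<iota> (a - b) = \<iota> a - \<iota> b"
  using iota_add[of "a - b" b] by (simp add: eq_diff_eq)

lemma complete_A_tendsto:
  assumes "\<forall>e>0. \<exists>N. \<forall>m\<ge>N. \<forall>k\<ge>N. A (X m - X k) < e"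
  shows "\<exists>L. (\<lambda>k. A (X k - L)) \<longlonglongrightarrow> 0"
proof -
  obtain L where L: "\<forall>e>0. \<exists>N. \<forall>m\<ge>N. A (X m - L) < e"
    using complete_A[OF assms] by blast
  have "(\<lambda>k. A (X k - L)) \<longlonglongrightarrow> 0"
    using L absval_nonneg[OF absval_A] by (intro LIMSEQ_I) auto
  then show ?thesis ..
qed

definition comb :: "nat set \<Rightarrow> (nat \<Rightarrow> 'q) \<Rightarrow> 'k" where
  "comb S c = (\<Sum>i\<in>S. \<iota> (c i) * bs i)"

lemma comb_cong: "(\<And>i. i \<in> S \<Longrightarrow> c i = d i) \<Longrightarrow> comb S c = comb S d"
  unfolding comb_def by simp

lemma comb_insert: "finite S \<Longrightarrow> j \<notin> S \<Longrightarrow> comb (insert j S) c = \<iota> (c j) * bs j + comb S c"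
  unfolding comb_def by simp

lemma comb_add: "comb S c + comb S d = comb S (\<lambda>i. c i + d i)"
  unfolding comb_def by (simp add: iota_add distrib_right sum.distrib)

lemma comb_diff: "comb S c - comb S d = comb S (\<lambda>i. c i - d i)"
  unfolding comb_def by (simp add: iota_diff left_diff_distrib sum_subtractf)

lemma comb_scale: "\<iota> a * comb S c = comb S (\<lambda>i. a * c i)"
  unfolding comb_def by (simp add: iota_mult sum_distrib_left mult.assoc)

lemma comb_le: "B (comb S c) \<le> (\<Sum>i\<in>S. A (c i) * B (bs i))"
  unfolding comb_def
  using absval_sum[OF absval_B, of "\<lambda>i. \<iota> (c i) * bs i" S]
  by (simp add: absval_mult[OF absval_B] abs_iota)

definition coord :: "'k \<Rightarrow> nat \<Rightarrow> 'q" where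
  "coord x = (THE c. c \<in> {..<n} \<rightarrow>\<^sub>E UNIV \<and> x = comb {..<n} c)"

lemma basis_comb: "\<exists>!c. c \<in> {..<n} \<rightarrow>\<^sub>E UNIV \<and> x = comb {..<n} c"
  unfolding comb_def lessThan_def[symmetric] by (rule basis)

lemma comb_coord: "comb {..<n} (coord x) = x"
  unfolding coord_def using theI'[OF basis_comb[of x]] by simp

lemma coord_comb:
  assumes "j < n"
  shows "coord (comb {..<n} c) j = c j"
proof -
  have "comb {..<n} c = comb {..<n} (restrict c {..<n})"
    by (rule comb_cong) simp
  then have "coord (comb {..<n} c) = restrict c {..<n}"
    unfolding coord_def by (intro the1_equality[OF basis_comb]) auto
  then show ?thesis
    using assms by simp
qed

lemma coord_linear:
  assumes "j < n"
  shows "coord (\<iota> a * x + y) j = a * coord x j + coord y j"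
proof -
  have "comb {..<n} (\<lambda>i. a * coord x i + coord y i)
      = \<iota> a * comb {..<n} (coord x) + comb {..<n} (coord y)"
    by (simp add: comb_scale comb_add)
  then show ?thesis
    using coord_comb[OF assms, of "\<lambda>i. a * coord x i + coord y i"] by (simp add: comb_coord)
qed

lemma comb_eq_0_coeff:
  assumes "S \<subseteq> {..<n}" "comb S c = 0" "j \<in> S"
  shows "c j = 0"
proof -
  define c' where "c' i = (if i \<in> S then c i else 0)" for i
  have "comb {..<n} c' = comb S c'"
    unfolding comb_def
  proof (rule sum.mono_neutral_right)
    show "\<forall>i\<in>{..<n} - S. \<iota> (c' i) * bs i = 0"
      by (simp add: c'_def iota_zero)
  qed (use assms(1) in simp_all)
  also have "\<dots> = 0"
    using assms(2) comb_cong[of S c' c] by (simp add: c'_def)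
  moreover have "j < n"
    using assms(1,3) by blast
  ultimately have "c' j = coord 0 j"
    using coord_comb[of j c'] by simp
  also have "\<dots> = 0"
    using coord_comb[OF \<open>j < n\<close>, of "\<lambda>_. 0"] by (simp add: comb_def iota_zero)
  finally show ?thesis
    using assms(3) by (simp add: c'_def)
qed

lemma n_pos: "n > 0"
  using basis_comb[of 1] by (auto simp: comb_def)

lemma comb_coeffs_converge:
  assumes "C \<ge> 0" and bound: "\<And>c i. i \<in> S \<Longrightarrow> A (c i) \<le> C * B (comb S c)"
    and cauchy: "\<forall>e>0. \<exists>N. \<forall>m\<ge>N. \<forall>k\<ge>N. B (comb S (c m) - comb S (c k)) < e"
  shows "\<exists>L. \<forall>i\<in>S. (\<lambda>k. A (c k i - L i)) \<longlonglongrightarrow> 0"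
proof -
  have "\<exists>L. (\<lambda>k. A (c k i - L)) \<longlonglongrightarrow> 0" if i: "i \<in> S" for i
  proof (rule complete_A_tendsto, intro allI impI)
    fix e :: real assume "e > 0"
    then have "e / (C + 1) > 0"
      using \<open>C \<ge> 0\<close> by simp
    then obtain N where N: "\<forall>m\<ge>N. \<forall>k\<ge>N. B (comb S (c m) - comb S (c k)) < e / (C + 1)"
      using cauchy by blast
    have "A (c m i - c k i) < e" if "m \<ge> N" "k \<ge> N" for m k
    proof -
      have "A (c m i - c k i) \<le> C * B (comb S (c m) - comb S (c k))"
        using bound[OF i, of "\<lambda>i. c m i - c k i"] by (simp add: comb_diff)
      also have "\<dots> \<le> (C + 1) * B (comb S (c m) - comb S (c k))"
        using absval_nonneg[OF absval_B] by (simp add: distrib_right)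
      also have "\<dots> < e"
        using N that \<open>C \<ge> 0\<close> by (simp add: pos_less_divide_eq mult.commute)
      finally show ?thesis .
    qed
    then show "\<exists>N. \<forall>m\<ge>N. \<forall>k\<ge>N. A (c m i - c k i) < e"
      by blast
  qed
  then show ?thesis
    by metis
qed

lemma comb_limit_in_span:
  assumes "C \<ge> 0" and bound: "\<And>c i. i \<in> S \<Longrightarrow> A (c i) \<le> C * B (comb S c)"
    and lim: "(\<lambda>k. B (comb S (c k) - y)) \<longlonglongrightarrow> 0"
  shows "\<exists>L. y = comb S L"
proof -
  obtain L where L: "\<And>i. i \<in> S \<Longrightarrow> (\<lambda>k. A (c k i - L i)) \<longlonglongrightarrow> 0"
    using comb_coeffs_converge[OF \<open>C \<ge> 0\<close> bound absval_Cauchy_if_tendsto[OF absval_B lim]] by blast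
  have "(\<lambda>k. A (L i - c k i) * B (bs i)) \<longlonglongrightarrow> 0" if "i \<in> S" for i
    using L[OF that]
    by (simp add: absval_diff_commute[OF absval_A, of "L i"] tendsto_mult_left_zero)
  then have "(\<lambda>k. \<Sum>i\<in>S. A (L i - c k i) * B (bs i)) \<longlonglongrightarrow> 0"
    by (rule tendsto_null_sum)
  then have "(\<lambda>k. (\<Sum>i\<in>S. A (L i - c k i) * B (bs i)) + B (comb S (c k) - y)) \<longlonglongrightarrow> 0"
    using tendsto_add[OF _ lim] by fastforce
  moreover have "B (comb S L - y) \<le> (\<Sum>i\<in>S. A (L i - c k i) * B (bs i)) + B (comb S (c k) - y)" for k
    using absval_triangle_diff[OF absval_B, of "comb S L" y "comb S (c k)"]
      comb_le[of S "\<lambda>i. L i - c k i"] by (simp add: comb_diff)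
  ultimately have "B (comb S L - y) \<le> 0"
    by (intro LIMSEQ_le_const) auto
  then have "y = comb S L"
    using absval_nonneg[OF absval_B, of "comb S L - y"] absval_eq_0_iff[OF absval_B] by simp
  then show ?thesis
    by blast
qed

lemma basis_dist_span_pos:
  assumes S: "insert j S \<subseteq> {..<n}" "j \<notin> S" and "C \<ge> 0"
    and bound: "\<And>c i. i \<in> S \<Longrightarrow> A (c i) \<le> C * B (comb S c)"
  shows "\<exists>\<delta>>0. \<forall>c. \<delta> \<le> B (bs j + comb S c)"
proof (rule ccontr)
  assume "\<not> ?thesis"
  then have "\<exists>c. B (bs j + comb S c) < inverse (real (Suc k))" for k
    by (meson not_le of_nat_0_less_iff positive_imp_inverse_positive zero_less_Suc)
  then obtain c where c: "\<And>k. B (bs j + comb S (c k)) < inverse (real (Suc k))"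
    by metis
  have "(\<lambda>k. B (comb S (c k) - (- bs j))) \<longlonglongrightarrow> 0"
    using c absval_nonneg[OF absval_B]
    by (intro tendsto_sandwich[OF _ _ tendsto_const LIMSEQ_inverse_real_of_nat])
      (auto intro!: always_eventually less_imp_le simp: add.commute)
  then obtain L where L: "- bs j = comb S L"
    using comb_limit_in_span[OF \<open>C \<ge> 0\<close> bound] by metis
  have "finite S"
    using S(1) by (meson finite_insert finite_lessThan finite_subset)
  moreover have "comb S (L(j := 1)) = comb S L"
    using S(2) by (intro comb_cong) auto
  ultimately have "comb (insert j S) (L(j := 1)) = 0"
    using S(2) L[symmetric] by (simp add: comb_insert iota_one)
  then have "(L(j := 1)) j = 0"
    using comb_eq_0_coeff[OF S(1)] by blast
  then show False
    by simp
qed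

lemma comb_insert_coeff_bound:
  assumes "finite S" "j \<notin> S" and dist: "\<And>c. \<delta> \<le> B (bs j + comb S c)"
  shows "A (c j) * \<delta> \<le> B (comb (insert j S) c)"
proof (cases "c j = 0")
  case True
  then show ?thesis
    by (simp add: absval_zero[OF absval_A] absval_nonneg[OF absval_B])
next
  case False
  have "comb (insert j S) c = \<iota> (c j) * (bs j + comb S (\<lambda>i. c i / c j))"
    using False assms(1,2) by (simp add: comb_insert comb_scale distrib_left)
  then have "B (comb (insert j S) c) = A (c j) * B (bs j + comb S (\<lambda>i. c i / c j))"
    by (simp add: absval_mult[OF absval_B] abs_iota)
  then show ?thesis
    using dist[of "\<lambda>i. c i / c j"] absval_nonneg[OF absval_A, of "c j"]
    by (simp add: mult_left_mono)
qed

lemma comb_le_comb_insert: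
  assumes "finite S" "j \<notin> S" "\<delta> > 0" and dist: "\<And>c. \<delta> \<le> B (bs j + comb S c)"
  shows "B (comb S c) \<le> (1 + B (bs j) / \<delta>) * B (comb (insert j S) c)"
proof -
  have "comb S c = comb (insert j S) c + - (\<iota> (c j) * bs j)"
    by (simp add: comb_insert[OF assms(1,2)])
  then have "B (comb S c) \<le> B (comb (insert j S) c) + A (c j) * B (bs j)"
    using absval_triangle[OF absval_B, of "comb (insert j S) c" "- (\<iota> (c j) * bs j)"]
    by (simp add: absval_minus[OF absval_B] absval_mult[OF absval_B] abs_iota)
  also have "\<dots> \<le> (1 + B (bs j) / \<delta>) * B (comb (insert j S) c)"
  proof -
    have "A (c j) \<le> B (comb (insert j S) c) / \<delta>"
      using comb_insert_coeff_bound[OF assms(1,2) dist, of c] \<open>\<delta> > 0\<close>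
      by (simp add: pos_le_divide_eq)
    then have "A (c j) * B (bs j) \<le> B (comb (insert j S) c) / \<delta> * B (bs j)"
      by (rule mult_right_mono) (rule absval_nonneg[OF absval_B])
    then show ?thesis
      by (simp add: algebra_simps)
  qed
  finally show ?thesis .
qed

lemma comb_coeff_bound:
  assumes "finite S" "S \<subseteq> {..<n}"
  shows "\<exists>C\<ge>0. \<forall>c. \<forall>i\<in>S. A (c i) \<le> C * B (comb S c)"
  using assms
proof (induction S rule: finite_induct)
  case empty
  then show ?case
    by auto
next
  case (insert j S)
  obtain C where C: "C \<ge> 0" "\<And>c i. i \<in> S \<Longrightarrow> A (c i) \<le> C * B (comb S c)"
    using insert by auto
  obtain \<delta> where \<delta>: "\<delta> > 0" "\<And>c. \<delta> \<le> B (bs j + comb S c)"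
    using basis_dist_span_pos[OF insert.prems insert.hyps(2) C] by blast
  define C' where "C' = max (1 / \<delta>) (C * (1 + B (bs j) / \<delta>))"
  have "A (c i) \<le> C' * B (comb (insert j S) c)" if "i \<in> insert j S" for c i
  proof (cases "i = j")
    case True
    then have "A (c i) \<le> 1 / \<delta> * B (comb (insert j S) c)"
      using comb_insert_coeff_bound[OF insert.hyps \<delta>(2)] \<delta>(1) by (simp add: pos_le_divide_eq)
    then show ?thesis
      unfolding C'_def
      by (rule order_trans) (rule mult_right_mono[OF max.cobounded1 absval_nonneg[OF absval_B]])
  next
    case False
    then have "A (c i) \<le> C * ((1 + B (bs j) / \<delta>) * B (comb (insert j S) c))"
      using that C comb_le_comb_insert[OF insert.hyps \<delta>]
      by (fastforce intro: order_trans mult_left_mono)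
    then show ?thesis
      unfolding C'_def mult.assoc[symmetric]
      by (rule order_trans) (rule mult_right_mono[OF max.cobounded2 absval_nonneg[OF absval_B]])
  qed
  moreover have "C' \<ge> 0"
    using \<delta>(1) by (simp add: C'_def le_max_iff_disj)
  ultimately show ?case
    by blast
qed

lemma coord_bound: "\<exists>C\<ge>0. \<forall>x j. j < n \<longrightarrow> A (coord x j) \<le> C * B x"
proof -
  obtain C where "C \<ge> 0" "\<forall>c. \<forall>i<n. A (c i) \<le> C * B (comb {..<n} c)"
    using comb_coeff_bound[of "{..<n}"] by auto
  then show ?thesis
    by (metis comb_coord)
qed

lemma bounded_additive_coord: "j < n \<Longrightarrow> bounded_additive B A (\<lambda>x. coord x j)"
  unfolding bounded_additive_def
  using coord_linear[of j 1] coord_bound by (simp add: iota_one) blast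

lemma bounded_additive_iota_mult: "bounded_additive A B (\<lambda>a. \<iota> a * b)"
  unfolding bounded_additive_def
  by (auto simp: iota_add distrib_left distrib_right absval_mult[OF absval_B] abs_iota mult.commute
      intro: exI[of _ "B b"])

section \<open>Exact bounded cohomology in coordinates\<close>

lemma QM_coord: "f \<in> QM G T B \<Longrightarrow> j < n \<Longrightarrow> (\<lambda>x. coord (f x) j) \<in> QM G T A"
  by (rule QM_compose[OF absval_B absval_A bounded_additive_coord])

lemma QM_comb:
  assumes "\<And>i. i < n \<Longrightarrow> u i \<in> QM G T A"
  shows "(\<lambda>x. comb {..<n} (\<lambda>i. u i x)) \<in> QM G T B"
  unfolding comb_def
proof (rule sum_closed_if_add_closed)
  fix i assume "i \<in> {..<n}"
  then show "(\<lambda>x. \<iota> (u i x) * bs i) \<in> QM G T B"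
    using assms by (intro QM_compose[OF absval_A absval_B bounded_additive_iota_mult]) simp
qed (simp_all add: QM_zero[OF absval_B] QM_add[OF absval_B])

lemma HB_comb:
  assumes "\<And>i. i < n \<Longrightarrow> u i \<in> HB G T A"
  shows "(\<lambda>x. comb {..<n} (\<lambda>i. u i x)) \<in> HB G T B"
  unfolding comb_def
proof (rule sum_closed_if_add_closed)
  fix i assume "i \<in> {..<n}"
  then show "(\<lambda>x. \<iota> (u i x) * bs i) \<in> HB G T B"
    using assms by (intro HB_compose[OF absval_A absval_B bounded_additive_iota_mult]) simp
qed (simp_all add: HB_zero HB_add[OF absval_B])

lemma HB_if_coords_HB:
  assumes "\<And>i. i < n \<Longrightarrow> (\<lambda>x. coord (f x) i) \<in> HB G T A"
  shows "f \<in> HB G T B"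
  using HB_comb[of "\<lambda>i x. coord (f x) i", OF assms] by (simp add: comb_coord)

definition EH_coords ::
    "('g, 'b) monoid_scheme \<Rightarrow> 'g topology \<Rightarrow> ('g \<Rightarrow> 'k) set \<Rightarrow> nat \<Rightarrow> ('g \<Rightarrow> 'q) set" where
  "EH_coords G T X = (\<lambda>i\<in>{..<n}. EH_map G T A (\<lambda>x. coord x i) X)"

lemma EH_coords_EHcls:
  assumes "f \<in> QM G T B"
  shows "EH_coords G T (EHcls G T B f) = (\<lambda>i\<in>{..<n}. EHcls G T A (\<lambda>x. coord (f x) i))"
  unfolding EH_coords_def
  using EH_map_EHcls[OF absval_B absval_A bounded_additive_coord assms] by (intro restrict_ext) simp

lemma inj_on_EH_coords: "inj_on (EH_coords G T) (EH2cb G T B)"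
proof (rule inj_onI)
  fix X Y assume "X \<in> EH2cb G T B" "Y \<in> EH2cb G T B" and eq: "EH_coords G T X = EH_coords G T Y"
  then obtain f g where f: "f \<in> QM G T B" "X = EHcls G T B f"
    and g: "g \<in> QM G T B" "Y = EHcls G T B g"
    unfolding EH2cb_def by blast
  have "(\<lambda>x. coord (g x - f x) i) \<in> HB G T A" if i: "i < n" for i
  proof -
    have "EHcls G T A (\<lambda>x. coord (f x) i) = EHcls G T A (\<lambda>x. coord (g x) i)"
      using fun_cong[OF eq, of i] i by (simp add: f g EH_coords_EHcls)
    then show ?thesis
      using EHcls_eq_iff[OF absval_A QM_coord[OF f(1) i] QM_coord[OF g(1) i]]
      by (simp add: bounded_additive_diff[OF bounded_additive_coord[OF i]])
  qed
  then have "(\<lambda>x. g x - f x) \<in> HB G T B"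
    by (rule HB_if_coords_HB)
  then show "X = Y"
    using EHcls_eq_iff[OF absval_B f(1) g(1)] f(2) g(2) by simp
qed

lemma EH_coords_image: "EH_coords G T ` EH2cb G T B = {..<n} \<rightarrow>\<^sub>E EH2cb G T A"
proof (intro equalityI subsetI)
  fix Y assume "Y \<in> EH_coords G T ` EH2cb G T B"
  then obtain f where "f \<in> QM G T B" "Y = EH_coords G T (EHcls G T B f)"
    unfolding EH2cb_def by blast
  then show "Y \<in> {..<n} \<rightarrow>\<^sub>E EH2cb G T A"
    by (auto simp: EH_coords_EHcls EH2cb_def QM_coord)
next
  fix Y assume Y: "Y \<in> {..<n} \<rightarrow>\<^sub>E EH2cb G T A"
  then have "\<forall>i\<in>{..<n}. \<exists>u. u \<in> QM G T A \<and> Y i = EHcls G T A u"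
    unfolding EH2cb_def by auto
  then obtain u where u: "\<And>i. i < n \<Longrightarrow> u i \<in> QM G T A \<and> Y i = EHcls G T A (u i)"
    by (metis lessThan_iff)
  define f where "f = (\<lambda>x. comb {..<n} (\<lambda>i. u i x))"
  have f: "f \<in> QM G T B"
    unfolding f_def using u by (intro QM_comb) auto
  have "EH_coords G T (EHcls G T B f) = (\<lambda>i\<in>{..<n}. Y i)"
    unfolding EH_coords_EHcls[OF f] using u by (intro restrict_ext) (simp add: f_def coord_comb)
  also have "\<dots> = Y"
    using Y by simp
  finally show "Y \<in> EH_coords G T ` EH2cb G T B"
    using f unfolding EH2cb_def by blast
qed

lemma bij_betw_EH_coords: "bij_betw (EH_coords G T) (EH2cb G T B) ({..<n} \<rightarrow>\<^sub>E EH2cb G T A)"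
  using inj_on_EH_coords EH_coords_image by (rule bij_betw_imageI)

lemma EH_coords_linear:
  assumes f: "f \<in> QM G T B" and g: "g \<in> QM G T B" and i: "i < n"
    and "u \<in> EH_coords G T (EHcls G T B f) i" "v \<in> EH_coords G T (EHcls G T B g) i"
  shows "(\<lambda>x. c * u x + v x) \<in> EH_coords G T (EHcls G T B (\<lambda>x. \<iota> c * f x + g x)) i"
proof -
  have "(\<lambda>x. c * u x + v x) \<in> EHcls G T A (\<lambda>x. c * coord (f x) i + coord (g x) i)"
    using assms(4,5) i by (intro EHcls_linear[OF absval_A]) (simp_all add: EH_coords_EHcls f g)
  then show ?thesis
    using i by (simp add: EH_coords_EHcls QM_linear[OF absval_B f g] coord_linear)
qed

lemma EH_coords_zero: "EH_coords G T (EHcls G T B (\<lambda>_. 0)) = (\<lambda>i\<in>{..<n}. EHcls G T A (\<lambda>_. 0))"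
  unfolding EH_coords_EHcls[OF QM_zero[OF absval_B]]
  using bounded_additive_zero[OF bounded_additive_coord] by (intro restrict_ext) simp

end

lemma bij_betw_PiE_singleton_iff:
  assumes bij: "bij_betw \<Phi> X (I \<rightarrow>\<^sub>E Y)" and "I \<noteq> {}"
    and x0: "x0 \<in> X" and \<Phi>x0: "\<Phi> x0 = (\<lambda>i\<in>I. y0)"
  shows "X = {x0} \<longleftrightarrow> Y = {y0}"
proof -
  obtain i where i: "i \<in> I"
    using \<open>I \<noteq> {}\<close> by blast
  have "y0 \<in> Y"
    using bij_betw_apply[OF bij x0] \<Phi>x0 i by auto
  show ?thesis
  proof
    assume "X = {x0}"
    then have PiE: "I \<rightarrow>\<^sub>E Y = {\<lambda>i\<in>I. y0}"
      using bij \<Phi>x0 by (simp add: bij_betw_def)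
    have "y = y0" if "y \<in> Y" for y
    proof -
      have "(\<lambda>i\<in>I. y) = (\<lambda>i\<in>I. y0)"
        using that PiE by (metis restrict_PiE_iff singletonD)
      then show ?thesis
        using i by (metis restrict_apply')
    qed
    then show "Y = {y0}"
      using \<open>y0 \<in> Y\<close> by blast
  next
    assume "Y = {y0}"
    then have "\<Phi> x = \<Phi> x0" if "x \<in> X" for x
      using bij_betw_apply[OF bij that] \<Phi>x0 by simp
    then show "X = {x0}"
      using x0 bij_betw_imp_inj_on[OF bij] by (auto dest: inj_onD)
  qed
qed

theorem corollary9p38:
  fixes p n :: nat
    and absQ :: "'q::field_char_0 \<Rightarrow> real"
    and absK :: "'k::field \<Rightarrow> real"
    and \<iota> :: "'q \<Rightarrow> 'k"
    and G :: "('g, 'b) monoid_scheme" and T :: "'g topology"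
  assumes "prime p"
    and Qp: "is_Qp p absQ"
    and hom: "\<forall>a b. \<iota> (a + b) = \<iota> a + \<iota> b" "\<forall>a b. \<iota> (a * b) = \<iota> a * \<iota> b" "\<iota> 1 = 1"
    and degree: "\<exists>bs :: nat \<Rightarrow> 'k. \<forall>x. \<exists>!c. c \<in> {..<n} \<rightarrow>\<^sub>E UNIV \<and> x = (\<Sum>i<n. \<iota> (c i) * bs i)"
    and absK: "absval absK" "\<forall>c. absK (\<iota> c) = absQ c"
    and TG: "topological_group G T"
  shows "(\<exists>\<Phi>. bij_betw \<Phi> (EH2cb G T absK) ({..<n} \<rightarrow>\<^sub>E EH2cb G T absQ)
           \<and> (\<forall>f\<in>QM G T absK. \<forall>g\<in>QM G T absK. \<forall>c. \<forall>u v.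
                (\<forall>i<n. u i \<in> \<Phi> (EHcls G T absK f) i \<and> v i \<in> \<Phi> (EHcls G T absK g) i) \<longrightarrow>
                (\<forall>i<n. (\<lambda>x. c * u i x + v i x)
                        \<in> \<Phi> (EHcls G T absK (\<lambda>x. \<iota> c * f x + g x)) i)))
       \<and> (EH2cb G T absK = {EHcls G T absK (\<lambda>_. 0)} \<longleftrightarrow> EH2cb G T absQ = {EHcls G T absQ (\<lambda>_. 0)})"
proof -
  obtain bs :: "nat \<Rightarrow> 'k" where bs: "\<forall>x. \<exists>!c. c \<in> {..<n} \<rightarrow>\<^sub>E UNIV \<and> x = (\<Sum>i<n. \<iota> (c i) * bs i)"
    using degree by blast
  interpret finite_valued_extension absQ absK \<iota> bs n
    using Qp hom absK bs unfolding is_Qp_def by unfold_locales auto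
  have zero_class: "EHcls G T absK (\<lambda>_. 0) \<in> EH2cb G T absK"
    unfolding EH2cb_def using QM_zero[OF absval_B] by blast
  show ?thesis
  proof (intro conjI exI[of _ "EH_coords G T"] ballI allI impI)
    show "bij_betw (EH_coords G T) (EH2cb G T absK) ({..<n} \<rightarrow>\<^sub>E EH2cb G T absQ)"
      by (rule bij_betw_EH_coords)
    fix f g c u v i
    assume "f \<in> QM G T absK" "g \<in> QM G T absK" "i < n"
      and "\<forall>i<n. u i \<in> EH_coords G T (EHcls G T absK f) i
                 \<and> v i \<in> EH_coords G T (EHcls G T absK g) i"
    then show "(\<lambda>x. c * u i x + v i x) \<in> EH_coords G T (EHcls G T absK (\<lambda>x. \<iota> c * f x + g x)) i"
      by (intro EH_coords_linear) auto
  next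
    show "EH2cb G T absK = {EHcls G T absK (\<lambda>_. 0)} \<longleftrightarrow> EH2cb G T absQ = {EHcls G T absQ (\<lambda>_. 0)}"
      using n_pos
      by (intro bij_betw_PiE_singleton_iff[OF bij_betw_EH_coords _ zero_class EH_coords_zero]) auto
  qed
qed

end
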